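(* Let $E$ be a finite set and let $\nu\colon 2^E\to\mathbb{R}\cup\{-\infty\}$ be an $\mathrm{M}^\natural$-concave function with $\nu(S)\ne-\infty$ for every $S\subseteq E$ with $|S|\le 2$. Then for any $0<q\le1$, the function \[ d(i,j)=\begin{cases}2q^{-\nu(\{i,j\})+\nu(\{i\})+\nu(\{j\})-\nu(\varnothing)}, & i\ne j,\\ 0,& i=j,\end{cases} \] is an ultrametric on $E$ of radius at most $1$, i.e. $d(i,j)\le\max\{d(i,k),d(k,j)\}$ for all $i,j,k\in E$ and $d(i,j)\le 2$ for all $i,j\in E$.
   Context: A function $\nu\colon 2^E\to\mathbb{R}\cup\{-\infty\}$ is $\mathrm{M}^\natural$-concave if for any $I_1,I_2\subseteq E$ and $i_1\in I_1\setminus I_2$, either $\nu(I_1)+\nu(I_2)\le \nu(I_1\setminus i_1)+\nu(I_2\cup i_1)$, or there is $i_2\in I_2\setminus I_1$ with $\nu(I_1)+\nu(I_2)\le \nu((I_1\setminus i_1)\cup i_2)+\nu((I_2\setminus i_2)\cup i_1)$. The radius of an ultrametric is half its diameter (maximum distance). *)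

theory Defs
  imports Complex_Main "HOL-Library.Extended_Real"
begin

text \<open>A function nu from subsets of E to the reals extended by minus infinity is
  modelled as nu :: 'a set => ereal, with the value +infinity excluded on subsets of E.\<close>

definition M_nat_concave :: "'a set \<Rightarrow> ('a set \<Rightarrow> ereal) \<Rightarrow> bool" where
  "M_nat_concave E \<nu> \<longleftrightarrow>
     (\<forall>S. S \<subseteq> E \<longrightarrow> \<nu> S \<noteq> \<infinity>) \<and>
     (\<forall>I1 I2 i1. I1 \<subseteq> E \<longrightarrow> I2 \<subseteq> E \<longrightarrow> i1 \<in> I1 - I2 \<longrightarrow>
        \<nu> I1 + \<nu> I2 \<le> \<nu> (I1 - {i1}) + \<nu> (I2 \<union> {i1}) \<or>
        (\<exists>i2 \<in> I2 - I1. \<nu> I1 + \<nu> I2 \<le> \<nu> ((I1 - {i1}) \<union> {i2}) + \<nu> ((I2 - {i2}) \<union> {i1})))"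

definition dist_nu :: "real \<Rightarrow> ('a set \<Rightarrow> ereal) \<Rightarrow> 'a \<Rightarrow> 'a \<Rightarrow> real" where
  "dist_nu q \<nu> i j =
     (if i = j then 0
      else 2 * q powr (- real_of_ereal (\<nu> {i, j}) + real_of_ereal (\<nu> {i})
                       + real_of_ereal (\<nu> {j}) - real_of_ereal (\<nu> {})))"

end

theory Submission
  imports Defs
begin

text \<open>Put \<open>a i j = \<nu>{i,j} - \<nu>{i} - \<nu>{j} + \<nu>{}\<close>, so that \<open>d i j = 2 * q powr (- a i j)\<close>
  for \<open>i \<noteq> j\<close>. The exchange axiom for \<open>I\<^sub>1 = {i,j}\<close>, \<open>I\<^sub>2 = {}\<close> gives \<open>a i j \<le> 0\<close>,
  and for \<open>I\<^sub>1 = {i,j}\<close>, \<open>I\<^sub>2 = {k}\<close> it gives \<open>a i j \<le> max (a i k) (a k j)\<close>.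
  As \<open>x \<mapsto> q powr (- x)\<close> is nondecreasing for \<open>0 < q \<le> 1\<close>, these become \<open>d \<le> 2\<close> and
  the ultrametric inequality.\<close>

lemma M_nat_concaveD:
  assumes "M_nat_concave E \<nu>" "I1 \<subseteq> E" "I2 \<subseteq> E" "i1 \<in> I1" "i1 \<notin> I2"
  shows "\<nu> I1 + \<nu> I2 \<le> \<nu> (I1 - {i1}) + \<nu> (I2 \<union> {i1}) \<or>
    (\<exists>i2 \<in> I2 - I1. \<nu> I1 + \<nu> I2 \<le> \<nu> ((I1 - {i1}) \<union> {i2}) + \<nu> ((I2 - {i2}) \<union> {i1}))"
  using assms unfolding M_nat_concave_def by blast

lemma M_nat_concave_pair_submodular:
  assumes "M_nat_concave E \<nu>" "i \<in> E" "j \<in> E" "i \<noteq> j"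
  shows "\<nu> {i, j} + \<nu> {} \<le> \<nu> {i} + \<nu> {j}"
proof -
  have "\<nu> {i, j} + \<nu> {} \<le> \<nu> ({i, j} - {i}) + \<nu> ({} \<union> {i})"
    using M_nat_concaveD[OF assms(1), of "{i, j}" "{}" i] assms(2,3) by auto
  moreover have "{i, j} - {i} = {j}" using assms(4) by auto
  ultimately show ?thesis by (simp add: add.commute)
qed

lemma M_nat_concave_pair_exchange:
  assumes "M_nat_concave E \<nu>" "i \<in> E" "j \<in> E" "k \<in> E" "i \<noteq> j" "i \<noteq> k" "j \<noteq> k"
  shows "\<nu> {i, j} + \<nu> {k} \<le> \<nu> {i, k} + \<nu> {j} \<or> \<nu> {i, j} + \<nu> {k} \<le> \<nu> {j, k} + \<nu> {i}"
proof -
  have "\<nu> {i, j} + \<nu> {k} \<le> \<nu> ({i, j} - {i}) + \<nu> ({k} \<union> {i}) \<or>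
      (\<exists>l \<in> {k} - {i, j}. \<nu> {i, j} + \<nu> {k} \<le> \<nu> (({i, j} - {i}) \<union> {l}) + \<nu> (({k} - {l}) \<union> {i}))"
    using M_nat_concaveD[OF assms(1), of "{i, j}" "{k}" i] assms by auto
  moreover have "{k} - {i, j} = {k}" "{i, j} - {i} = {j}" "{k} \<union> {i} = {i, k}"
    "{j} \<union> {k} = {j, k}" "({k} - {k}) \<union> {i} = {i}"
    using assms by auto
  ultimately show ?thesis
    by (simp add: add.commute)
qed

lemma ereal_add_le_add_iff_real:
  fixes x y z w :: ereal
  assumes "\<bar>x\<bar> \<noteq> \<infinity>" "\<bar>y\<bar> \<noteq> \<infinity>" "\<bar>z\<bar> \<noteq> \<infinity>" "\<bar>w\<bar> \<noteq> \<infinity>"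
  shows "x + y \<le> z + w \<longleftrightarrow>
    real_of_ereal x + real_of_ereal y \<le> real_of_ereal z + real_of_ereal w"
proof -
  obtain a b c d where "x = ereal a" "y = ereal b" "z = ereal c" "w = ereal d"
    using assms by (metis ereal_real')
  then show ?thesis by simp
qed

definition pair_gain :: "('a set \<Rightarrow> ereal) \<Rightarrow> 'a \<Rightarrow> 'a \<Rightarrow> real" where
  "pair_gain \<nu> i j = real_of_ereal (\<nu> {i, j}) - real_of_ereal (\<nu> {i})
                     - real_of_ereal (\<nu> {j}) + real_of_ereal (\<nu> {})"

lemma pair_gain_commute: "pair_gain \<nu> i j = pair_gain \<nu> j i"
  by (simp add: pair_gain_def insert_commute)

lemma dist_nu_eq_pair_gain: "i \<noteq> j \<Longrightarrow> dist_nu q \<nu> i j = 2 * q powr (- pair_gain \<nu> i j)"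
  by (simp add: dist_nu_def pair_gain_def algebra_simps)

lemma dist_nu_commute: "dist_nu q \<nu> i j = dist_nu q \<nu> j i"
  by (cases "i = j") (simp_all add: dist_nu_eq_pair_gain pair_gain_commute)

lemma dist_nu_self: "dist_nu q \<nu> i i = 0"
  by (simp add: dist_nu_def)

lemma dist_nu_pos: "0 < q \<Longrightarrow> i \<noteq> j \<Longrightarrow> 0 < dist_nu q \<nu> i j"
  by (simp add: dist_nu_eq_pair_gain)

lemma dist_nu_nonneg: "0 < q \<Longrightarrow> 0 \<le> dist_nu q \<nu> i j"
  by (cases "i = j") (simp_all add: dist_nu_self dist_nu_pos less_imp_le)

lemma powr_neg_mono_base_le_1: "0 < q \<Longrightarrow> q \<le> (1::real) \<Longrightarrow> x \<le> y \<Longrightarrow> q powr (- x) \<le> q powr (- y)"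
  by (simp add: powr_mono')

context
  fixes E :: "'a set" and \<nu> :: "'a set \<Rightarrow> ereal"
  assumes concave: "M_nat_concave E \<nu>"
    and small_finite: "\<And>S. S \<subseteq> E \<Longrightarrow> card S \<le> 2 \<Longrightarrow> \<nu> S \<noteq> -\<infinity>"
begin

lemma abs_small_finite: "S \<subseteq> E \<Longrightarrow> card S \<le> 2 \<Longrightarrow> \<bar>\<nu> S\<bar> \<noteq> \<infinity>"
  using concave small_finite unfolding M_nat_concave_def by auto

lemma abs_singleton_finite: "i \<in> E \<Longrightarrow> \<bar>\<nu> {i}\<bar> \<noteq> \<infinity>"
  by (simp add: abs_small_finite)

lemma abs_empty_finite: "\<bar>\<nu> {}\<bar> \<noteq> \<infinity>"
  by (simp add: abs_small_finite)

lemma abs_pair_finite: "i \<in> E \<Longrightarrow> j \<in> E \<Longrightarrow> \<bar>\<nu> {i, j}\<bar> \<noteq> \<infinity>"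
  by (simp add: abs_small_finite card_insert_le_m1)

lemma pair_gain_nonpos:
  assumes "i \<in> E" "j \<in> E" "i \<noteq> j"
  shows "pair_gain \<nu> i j \<le> 0"
  using M_nat_concave_pair_submodular[OF concave assms]
  by (simp add: ereal_add_le_add_iff_real abs_empty_finite abs_singleton_finite abs_pair_finite
      assms pair_gain_def)

lemma pair_gain_ultrametric:
  assumes "i \<in> E" "j \<in> E" "k \<in> E" "i \<noteq> j" "i \<noteq> k" "j \<noteq> k"
  shows "pair_gain \<nu> i j \<le> max (pair_gain \<nu> i k) (pair_gain \<nu> k j)"
  using M_nat_concave_pair_exchange[OF concave assms]
  by (simp add: ereal_add_le_add_iff_real abs_singleton_finite abs_pair_finite assms
      pair_gain_def insert_commute le_max_iff_disj, linarith)

lemma dist_nu_le_2: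
  assumes "0 < q" "q \<le> 1" "i \<in> E" "j \<in> E"
  shows "dist_nu q \<nu> i j \<le> 2"
proof (cases "i = j")
  case False
  have "q powr (- pair_gain \<nu> i j) \<le> q powr (- 0)"
    using powr_neg_mono_base_le_1 pair_gain_nonpos[OF assms(3,4) False] assms(1,2) by blast
  then show ?thesis using assms(1) by (simp add: dist_nu_eq_pair_gain[OF False])
qed (simp add: dist_nu_self)

lemma dist_nu_ultrametric:
  assumes "0 < q" "q \<le> 1" "i \<in> E" "j \<in> E" "k \<in> E"
  shows "dist_nu q \<nu> i j \<le> max (dist_nu q \<nu> i k) (dist_nu q \<nu> k j)"
proof (cases "i = j \<or> k = i \<or> k = j")
  case True
  then consider "i = j" | "k = i" | "k = j" by blast
  then show ?thesis
  proof cases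
    case 1
    then show ?thesis using dist_nu_nonneg[OF assms(1), of \<nu> i k] by (simp add: dist_nu_self)
  qed (simp_all add: dist_nu_self)
next
  case False
  then have ij: "i \<noteq> j" and ik: "i \<noteq> k" and kj: "k \<noteq> j" by auto
  have dist_mono: "dist_nu q \<nu> i j \<le> dist_nu q \<nu> a b"
    if "pair_gain \<nu> i j \<le> pair_gain \<nu> a b" "a \<noteq> b" for a b
    unfolding dist_nu_eq_pair_gain[OF ij] dist_nu_eq_pair_gain[OF that(2)]
    using powr_neg_mono_base_le_1[OF assms(1,2) that(1)] by linarith
  have "pair_gain \<nu> i j \<le> max (pair_gain \<nu> i k) (pair_gain \<nu> k j)"
    using pair_gain_ultrametric[OF assms(3-5) ij ik kj[symmetric]] .
  then consider "pair_gain \<nu> i j \<le> pair_gain \<nu> i k" | "pair_gain \<nu> i j \<le> pair_gain \<nu> k j"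
    by (auto simp only: le_max_iff_disj)
  then show ?thesis
  proof cases
    case 1
    show ?thesis by (rule max.coboundedI1, rule dist_mono[OF 1 ik])
  next
    case 2
    show ?thesis by (rule max.coboundedI2, rule dist_mono[OF 2 kj])
  qed
qed

end

theorem lemma3p3:
  fixes E :: "'a set" and \<nu> :: "'a set \<Rightarrow> ereal" and q :: real
  assumes "finite E"
    and "M_nat_concave E \<nu>"
    and "\<And>S. S \<subseteq> E \<Longrightarrow> card S \<le> 2 \<Longrightarrow> \<nu> S \<noteq> -\<infinity>"
    and "0 < q" and "q \<le> 1"
  shows "(\<forall>i\<in>E. \<forall>j\<in>E. dist_nu q \<nu> i j = dist_nu q \<nu> j i)
       \<and> (\<forall>i\<in>E. \<forall>j\<in>E. i \<noteq> j \<longrightarrow> dist_nu q \<nu> i j > 0)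
       \<and> (\<forall>i\<in>E. dist_nu q \<nu> i i = 0)
       \<and> (\<forall>i\<in>E. \<forall>j\<in>E. \<forall>k\<in>E. dist_nu q \<nu> i j \<le> max (dist_nu q \<nu> i k) (dist_nu q \<nu> k j))
       \<and> (\<forall>i\<in>E. \<forall>j\<in>E. dist_nu q \<nu> i j \<le> 2)"
proof (intro conjI ballI impI)
  fix i j k
  assume "i \<in> E" "j \<in> E" "k \<in> E"
  then show "dist_nu q \<nu> i j \<le> max (dist_nu q \<nu> i k) (dist_nu q \<nu> k j)"
    using dist_nu_ultrametric[OF assms(2,3,4,5)] by simp
next
  fix i j
  assume "i \<in> E" "j \<in> E"
  then show "dist_nu q \<nu> i j \<le> 2"
    using dist_nu_le_2[OF assms(2,3,4,5)] by simp
qed (simp_all add: dist_nu_commute dist_nu_self dist_nu_pos assms(4))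

end
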